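(* Let $\mu, z \in \mathcal{X}$ and let $P_X$ be a probability distribution on $\mathcal{X}$. The influence function $IF(z; D, \mu, P_X) := \lim_{\varepsilon \downarrow 0} \frac{D(\mu; (1 - \varepsilon) P_X + \varepsilon \delta_z) - D(\mu; P_X)}{\varepsilon}$ exists and equals $IF(z; D, \mu, P_X) = 2 - 2 D(\mu; P_X) - \mathrm{E} \{ h(X, z, \mu) \}$, where $X \sim P_X$. Moreover, $\sup_{z \in \mathcal{X}} | IF(z; D, \mu, P_X) | \leq 4$.
   Context: $(\mathcal{X}, d)$ is a complete separable metric space with its Borel $\sigma$-algebra. Define $h: \mathcal{X}^3 \to \mathbb{R}$ by $h(x_1, x_2, x_3) := \mathbb{I}( x_3 \notin \{x_1, x_2\} ) \dfrac{ d^2(x_1, x_3) + d^2(x_2, x_3) - d^2(x_1, x_2) }{d(x_1, x_3)\, d(x_2, x_3) }$, where $h := 0$ when $x_3 \in \{x_1,x_2\}$. The metric spatial depth of $\mu \in \mathcal{X}$ with respect to a probability distribution $P_X$ on $\mathcal{X}$ is $D(\mu; P_X) := 1 - \frac{1}{2} \mathrm{E} \{ h(X_1, X_2, \mu) \}$, where $X_1, X_2 \sim P_X$ are independent. $\delta_z$ denotes the Dirac point mass at $z$, and $(1-\varepsilon)P_X + \varepsilon\delta_z$ the corresponding mixture distribution. *)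

theory Defs
  imports "HOL-Probability.Probability"
begin

definition msd_h :: "'a::metric_space \<Rightarrow> 'a \<Rightarrow> 'a \<Rightarrow> real" where
  "msd_h x1 x2 x3 =
     (if x3 \<notin> {x1, x2}
      then (dist x1 x3 ^ 2 + dist x2 x3 ^ 2 - dist x1 x2 ^ 2) / (dist x1 x3 * dist x2 x3)
      else 0)"

definition msd_depth :: "'a::metric_space \<Rightarrow> 'a measure \<Rightarrow> real" where
  "msd_depth \<mu> P = 1 - (1/2) * (\<integral>p. msd_h (fst p) (snd p) \<mu> \<partial>(P \<Otimes>\<^sub>M P))"

definition mixture :: "real \<Rightarrow> 'a::topological_space measure \<Rightarrow> 'a \<Rightarrow> 'a measure" where
  "mixture \<epsilon> P z = measure_of UNIV (sets borel)
     (\<lambda>A. ennreal (1 - \<epsilon>) * emeasure P A + ennreal \<epsilon> * indicator A z)"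

end

theory Submission
  imports Defs
begin

text \<open>The contaminated law is the Bernoulli mixture of \<open>\<delta>\<^sub>z\<close> and \<open>P\<close>, so it integrates every
  bounded measurable function affinely in \<open>\<epsilon>\<close>. Applying this in both coordinates of the product
  integral (the kernel \<open>h\<close> is bounded by 2 by the triangle inequality) shows that
  \<open>D(\<mu>; (1 - \<epsilon>) P + \<epsilon> \<delta>\<^sub>z)\<close> is a quadratic polynomial in \<open>\<epsilon>\<close>; the influence function is its
  linear coefficient, and each of its two integrals is bounded by 2 in absolute value.\<close>

lemma msd_h_commute: "msd_h x y m = msd_h y x m"
  unfolding msd_h_def by (simp add: dist_commute insert_commute mult.commute add.commute)

lemma abs_msd_h_le: "\<bar>msd_h x y m\<bar> \<le> 2"
proof (cases "m \<in> {x, y}")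
  case False
  define a b c where "a = dist x m" and "b = dist y m" and "c = dist x y"
  have pos: "a > 0" "b > 0" using False by (auto simp: a_def b_def)
  have "\<bar>a - b\<bar> \<le> c" "c \<le> a + b"
    unfolding a_def b_def c_def by (smt (verit) dist_commute dist_triangle)+
  then have "(a - b)\<^sup>2 \<le> c\<^sup>2" "c\<^sup>2 \<le> (a + b)\<^sup>2"
    by (metis abs_le_square_iff abs_of_nonneg c_def zero_le_dist, intro power_mono) (simp_all add: c_def)
  then have "\<bar>a\<^sup>2 + b\<^sup>2 - c\<^sup>2\<bar> \<le> 2 * (a * b)"
    by (simp add: power2_eq_square algebra_simps abs_le_iff)
  then show ?thesis
    using False pos by (simp add: msd_h_def a_def b_def c_def abs_mult divide_le_eq)
qed (simp add: msd_h_def)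

lemma borel_measurable_msd_h[measurable]:
  fixes m :: "'a::{metric_space, second_countable_topology}"
  assumes [measurable]: "f \<in> borel_measurable M" "g \<in> borel_measurable M"
  shows "(\<lambda>p. msd_h (f p) (g p) m) \<in> borel_measurable M"
  unfolding msd_h_def insert_iff empty_iff by measurable

lemma (in prob_space) abs_integral_le_const:
  fixes f :: "'a \<Rightarrow> real"
  assumes "f \<in> borel_measurable M" and "\<And>x. \<bar>f x\<bar> \<le> K"
  shows "\<bar>\<integral>x. f x \<partial>M\<bar> \<le> K"
proof -
  have "integrable M f"
    using assms by (intro integrable_const_bound[where B = K]) auto
  then have "(\<integral>x. f x \<partial>M) \<le> K" "- K \<le> (\<integral>x. f x \<partial>M)"
    using assms(2) by (auto intro!: integral_le_const integral_ge_const simp: abs_le_iff minus_le_iff)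
  then show ?thesis by linarith
qed

lemma measurable_return_or_prob_space:
  assumes "prob_space P" and "sets P = sets borel"
  shows "(\<lambda>b. if b then return borel z else P) \<in> measure_pmf p \<rightarrow>\<^sub>M subprob_algebra borel"
  using assms by (auto simp: space_subprob_algebra prob_space_imp_subprob_space subprob_space_return)

lemma mixture_eq_bind_bernoulli:
  assumes P: "prob_space P" "sets P = sets borel" and e: "0 \<le> e" "e \<le> 1"
  shows "mixture e P z = measure_pmf (bernoulli_pmf e) \<bind> (\<lambda>b. if b then return borel z else P)"
    (is "_ = ?M")
proof -
  note kernel = measurable_return_or_prob_space[OF P]
  have sets_M: "sets ?M = sets borel"
    using P by (subst sets_bind) auto
  have "emeasure ?M A = ennreal (1 - e) * emeasure P A + ennreal e * indicator A z"
    if "A \<in> sets borel" for A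
    using that e P by (subst emeasure_bind[OF _ kernel]) (auto simp: mult.commute add.commute)
  then have "mixture e P z = measure_of UNIV (sets borel) (emeasure ?M)"
    unfolding mixture_def by (intro measure_of_eq) (auto simp: sets.sigma_sets_eq[of borel, simplified])
  also have "\<dots> = ?M"
    using measure_of_of_measure[of ?M] sets_M by (metis sets_eq_imp_space_eq space_borel)
  finally show ?thesis .
qed

lemma
  assumes P: "prob_space P" "sets P = sets borel" and e: "0 \<le> e" "e \<le> 1"
  shows prob_space_mixture: "prob_space (mixture e P z)"
    and sets_mixture: "sets (mixture e P z) = sets borel"
  using P unfolding mixture_eq_bind_bernoulli[OF P e]
  by (auto intro!: prob_space.prob_space_bind[OF prob_space_measure_pmf _
        measurable_return_or_prob_space[OF P]] simp: prob_space_return)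

lemma integral_mixture:
  fixes f :: "'a::topological_space \<Rightarrow> real"
  assumes P: "prob_space P" "sets P = sets borel" and e: "0 \<le> e" "e \<le> 1"
    and f: "f \<in> borel_measurable borel" "\<And>x. \<bar>f x\<bar> \<le> K"
  shows "(\<integral>x. f x \<partial>mixture e P z) = (1 - e) * (\<integral>x. f x \<partial>P) + e * f z"
proof -
  have "(\<integral>x. f x \<partial>mixture e P z)
      = (\<integral>b. (\<integral>x. f x \<partial>(if b then return borel z else P)) \<partial>bernoulli_pmf e)"
    unfolding mixture_eq_bind_bernoulli[OF P e]
    using P f(2) measure_pmf.finite_measure_axioms
    by (intro integral_bind[OF f(1) _ measurable_return_or_prob_space[OF P], where B = K and B' = 1])
       (auto simp: prob_space.emeasure_space_1)
  also have "\<dots> = (1 - e) * (\<integral>x. f x \<partial>P) + e * f z"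
    using e f by (simp add: integral_return)
  finally show ?thesis .
qed

lemma msd_depth_eq_iterated_integral:
  fixes m :: "'a::{metric_space, second_countable_topology}"
  assumes P: "prob_space P" "sets P = sets borel"
  shows "msd_depth m P = 1 - 1/2 * (\<integral>x. \<integral>y. msd_h x y m \<partial>P \<partial>P)"
proof -
  interpret prob_space P by (rule P(1))
  interpret pair_prob_space P P ..
  have "(\<lambda>p. msd_h (fst p) (snd p) m) \<in> borel_measurable (P \<Otimes>\<^sub>M P)"
    using measurable_fst[of P P] measurable_snd[of P P]
    by (simp add: measurable_cong_sets[OF refl P(2)])
  then have "integrable (P \<Otimes>\<^sub>M P) (\<lambda>p. msd_h (fst p) (snd p) m)"
    by (intro P.integrable_const_bound[where B = 2]) (auto simp: abs_msd_h_le)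
  from integral_fst'[OF this] show ?thesis
    unfolding msd_depth_def by simp
qed

lemma borel_measurable_integral_msd_h:
  fixes m :: "'a::{metric_space, second_countable_topology}"
  assumes P: "prob_space P" "sets P = sets borel"
  shows "(\<lambda>x. \<integral>y. msd_h x y m \<partial>P) \<in> borel_measurable borel"
proof -
  interpret prob_space P by (rule P(1))
  have "snd \<in> borel \<Otimes>\<^sub>M P \<rightarrow>\<^sub>M borel"
    using measurable_snd[of borel P] by (simp add: measurable_cong_sets[OF refl P(2)])
  then have "(\<lambda>p. msd_h (fst p) (snd p) m) \<in> borel_measurable (borel \<Otimes>\<^sub>M P)"
    by measurable
  then show ?thesis
    by (intro borel_measurable_lebesgue_integral) (simp add: case_prod_beta')
qed

lemma abs_integral_msd_h_le:
  fixes m :: "'a::{metric_space, second_countable_topology}"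
  assumes "prob_space P" and "sets P = sets borel"
  shows "\<bar>\<integral>y. msd_h x y m \<partial>P\<bar> \<le> 2"
  using assms
  by (intro prob_space.abs_integral_le_const) (simp_all add: abs_msd_h_le measurable_cong_sets[OF assms(2) refl])

lemma msd_depth_mixture:
  fixes m z :: "'a::{metric_space, second_countable_topology}"
  assumes P: "prob_space P" "sets P = sets borel" and e: "0 \<le> e" "e \<le> 1"
  shows "msd_depth m (mixture e P z) = 1 - 1/2 * ((1 - e)\<^sup>2 * (\<integral>x. \<integral>y. msd_h x y m \<partial>P \<partial>P)
           + 2 * e * (1 - e) * (\<integral>x. msd_h x z m \<partial>P) + e\<^sup>2 * msd_h z z m)"
proof -
  interpret prob_space P by (rule P(1))
  define A where "A x = (\<integral>y. msd_h x y m \<partial>P)" for x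
  have borel_P: "measurable P = measurable borel"
    using measurable_cong_sets[OF P(2) refl] by blast
  have A_meas: "A \<in> borel_measurable borel"
    unfolding A_def by (rule borel_measurable_integral_msd_h[OF P])
  have A_bound: "\<bar>A x\<bar> \<le> 2" for x
    unfolding A_def by (rule abs_integral_msd_h_le[OF P])
  have A_integrable: "integrable P A"
    using A_meas A_bound by (intro integrable_const_bound[where B = 2]) (simp_all add: borel_P)
  have h_integrable: "integrable P (\<lambda>x. msd_h x z m)"
    by (intro integrable_const_bound[where B = 2]) (simp_all add: abs_msd_h_le borel_P)
  have combination_bound: "\<bar>(1 - e) * A x + e * msd_h x z m\<bar> \<le> 2" for x
  proof -
    have "\<bar>A x\<bar> \<le> 2" "\<bar>msd_h x z m\<bar> \<le> 2"
      by (rule A_bound, rule abs_msd_h_le)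
    then have "(1 - e) * A x + e * msd_h x z m \<le> 2" "(1 - e) * - A x + e * - msd_h x z m \<le> 2"
      using e by (intro convex_bound_le; simp add: abs_le_iff)+
    then show ?thesis by linarith
  qed
  have "(\<integral>x. \<integral>y. msd_h x y m \<partial>mixture e P z \<partial>mixture e P z)
      = (\<integral>x. (1 - e) * A x + e * msd_h x z m \<partial>mixture e P z)"
    unfolding A_def by (intro Bochner_Integration.integral_cong refl integral_mixture[OF P e _ abs_msd_h_le]) simp
  also have "\<dots> = (1 - e) * (\<integral>x. (1 - e) * A x + e * msd_h x z m \<partial>P) + e * ((1 - e) * A z + e * msd_h z z m)"
    using A_meas combination_bound by (intro integral_mixture[OF P e]) simp_all
  also have "(\<integral>x. (1 - e) * A x + e * msd_h x z m \<partial>P) = (1 - e) * (\<integral>x. A x \<partial>P) + e * (\<integral>x. msd_h x z m \<partial>P)"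
    using A_integrable h_integrable by simp
  also have "A z = (\<integral>x. msd_h x z m \<partial>P)"
    unfolding A_def by (simp add: msd_h_commute[of z])
  finally show ?thesis
    unfolding msd_depth_eq_iterated_integral[OF prob_space_mixture[OF P e] sets_mixture[OF P e]] A_def
    by (simp add: power2_eq_square algebra_simps)
qed

definition msd_influence :: "'a::metric_space \<Rightarrow> 'a measure \<Rightarrow> 'a \<Rightarrow> real" where
  "msd_influence \<mu> P z = 2 - 2 * msd_depth \<mu> P - (\<integral>x. msd_h x z \<mu> \<partial>P)"

lemma msd_influence_eq_integrals:
  fixes \<mu> z :: "'a::{metric_space, second_countable_topology}"
  assumes "prob_space P" and "sets P = sets borel"
  shows "msd_influence \<mu> P z = (\<integral>x. \<integral>y. msd_h x y \<mu> \<partial>P \<partial>P) - (\<integral>x. msd_h x z \<mu> \<partial>P)"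
  unfolding msd_influence_def msd_depth_eq_iterated_integral[OF assms] by simp

lemma abs_msd_influence_le:
  fixes \<mu> z :: "'a::{metric_space, second_countable_topology}"
  assumes P: "prob_space P" "sets P = sets borel"
  shows "\<bar>msd_influence \<mu> P z\<bar> \<le> 4"
proof -
  have "\<bar>\<integral>x. \<integral>y. msd_h x y \<mu> \<partial>P \<partial>P\<bar> \<le> 2"
    using abs_integral_msd_h_le[OF P]
    by (intro prob_space.abs_integral_le_const[OF P(1)])
       (simp_all add: measurable_cong_sets[OF P(2) refl] borel_measurable_integral_msd_h[OF P] abs_msd_h_le)
  moreover have "\<bar>\<integral>x. msd_h x z \<mu> \<partial>P\<bar> \<le> 2"
    unfolding msd_h_commute[of _ z] by (rule abs_integral_msd_h_le[OF P])
  ultimately show ?thesis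
    unfolding msd_influence_eq_integrals[OF P] by linarith
qed

lemma msd_depth_mixture_difference_quotient:
  fixes \<mu> z :: "'a::{metric_space, second_countable_topology}"
  assumes P: "prob_space P" "sets P = sets borel" and e: "0 < e" "e \<le> 1"
  shows "(msd_depth \<mu> (mixture e P z) - msd_depth \<mu> P) / e
    = msd_influence \<mu> P z - e / 2 * (msd_influence \<mu> P z - (\<integral>x. msd_h x z \<mu> \<partial>P) + msd_h z z \<mu>)"
proof -
  define I J c where "I = (\<integral>x. \<integral>y. msd_h x y \<mu> \<partial>P \<partial>P)" and "J = (\<integral>x. msd_h x z \<mu> \<partial>P)"
    and "c = msd_h z z \<mu>"
  have "msd_depth \<mu> (mixture e P z) - msd_depth \<mu> P
      = e * (msd_influence \<mu> P z - e / 2 * (msd_influence \<mu> P z - J + c))"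
    unfolding msd_depth_mixture[OF P less_imp_le[OF e(1)] e(2)] msd_influence_eq_integrals[OF P]
      msd_depth_eq_iterated_integral[OF P] I_def[symmetric] J_def[symmetric] c_def[symmetric]
    by (simp add: algebra_simps power2_eq_square)
  with e show ?thesis
    unfolding J_def c_def by simp
qed

lemma tendsto_msd_influence:
  fixes \<mu> z :: "'a::{metric_space, second_countable_topology}"
  assumes P: "prob_space P" "sets P = sets borel"
  shows "((\<lambda>e. (msd_depth \<mu> (mixture e P z) - msd_depth \<mu> P) / e) \<longlongrightarrow> msd_influence \<mu> P z) (at_right 0)"
proof -
  define IF K where "IF = msd_influence \<mu> P z" and "K = IF - (\<integral>x. msd_h x z \<mu> \<partial>P) + msd_h z z \<mu>"
  have quotient_eq: "\<forall>\<^sub>F e in at_right 0. (msd_depth \<mu> (mixture e P z) - msd_depth \<mu> P) / e = IF - e / 2 * K"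
    unfolding eventually_at_right[OF zero_less_one] IF_def K_def
    using msd_depth_mixture_difference_quotient[OF P] by (intro exI[of _ 1]) simp
  have "((\<lambda>e. IF - e / 2 * K) \<longlongrightarrow> IF - 0 / 2 * K) (at_right 0)"
    by (intro tendsto_intros) simp
  then show ?thesis
    unfolding tendsto_cong[OF quotient_eq] IF_def by simp
qed

theorem theorem2:
  fixes \<mu> z :: "'a::polish_space" and P :: "'a measure"
  assumes "prob_space P" and "sets P = sets borel"
  shows "((\<lambda>\<epsilon>. (msd_depth \<mu> (mixture \<epsilon> P z) - msd_depth \<mu> P) / \<epsilon>)
            \<longlongrightarrow> 2 - 2 * msd_depth \<mu> P - (\<integral>x. msd_h x z \<mu> \<partial>P)) (at_right 0) \<and>
         (\<forall>z'. \<bar>2 - 2 * msd_depth \<mu> P - (\<integral>x. msd_h x z' \<mu> \<partial>P)\<bar> \<le> 4)"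
  using tendsto_msd_influence[OF assms] abs_msd_influence_le[OF assms]
  unfolding msd_influence_def by blast

end
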